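(* Let $n\ge5$ and let $\varrho:H_n\to\mathcal L$ be a homomorphism with $\mathrm{Area}\,\varrho=(n-4)\pi$. Then for every $i$ (indices mod $n$) there is $q_i\in\mathrm BW$ with $\varrho(r_i)=R(q_i)$; moreover $q_{i-1}\ne q_i$ and $\varrho(r_ir_{i-1})$ is hyperbolic for every $i$. Furthermore, fix $i$, let $x\in\mathrm SW$ be a fixed point of $\varrho(r_ir_{i-1})$, put $p_{i-2}:=x$ and $p_k:=\varrho(r_k)p_{k-1}$ for $k=i-1,i,i+1,\dots$ (so $p_i=p_{i-2}$); then the cycle $p_i,p_{i+1},\dots,p_{i+n-3}$ of points of $\mathrm SW$ is positive.
   Context: Let $W$ be a 2-dimensional complex vector space with a hermitian form $\langle\cdot,\cdot\rangle$ of signature $(+,-)$. In $\mathbb{CP}W$ let $\mathrm BW$ be the negative points (the Poincaré disc, curvature $-1$, oriented by its complex structure), $\mathrm SW$ the isotropic points (its ideal boundary circle), $\overline{\mathrm B}W=\mathrm BW\cup\mathrm SW$. $\mathcal L=\mathrm{PU}(W)$ is the group of orientation-preserving isometries of $\mathrm BW$. For $q\in\mathrm BW$, $R(q)\in\mathcal L$ is the reflection in $q$ (the involution of $\mathcal L$ fixing $q$). An element of $\mathcal L$ is hyperbolic if it has exactly two fixed points in $\overline{\mathrm B}W$, both in $\mathrm SW$. Oriented triangle area: $\mathrm{Area}\,\Delta(p_1,p_2,p_3)=2\arg(-\langle p_1,p_2\rangle\langle p_2,p_3\rangle\langle p_3,p_1\rangle)$ ($\arg\in[-\pi,\pi]$)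 if no two vertices are equal isotropic points, $0$ otherwise (signed area, positive for counterclockwise vertices). $\mathrm{Area}(p_1,\dots,p_m):=\sum_{k=1}^m\mathrm{Area}\,\Delta(c,p_k,p_{k+1})$ (indices mod $m$), independent of $c\in\overline{\mathrm B}W$. $H_n$ ($n\ge5$) is the group generated by $r_1,\dots,r_n$ with relations $r_i^2=1$, $r_n\cdots r_1=1$; indices of the $r_i$ are mod $n$. For a homomorphism $\varrho:H_n\to\mathcal L$, $\mathrm{Area}\,\varrho:=\mathrm{Area}(p_1,\dots,p_n)$ where $p_0\in\overline{\mathrm B}W$ is arbitrary and $p_k=\varrho(r_k)p_{k-1}$ (this does not depend on $p_0$). A cycle $z_1,\dots,z_k\in\mathrm SW$, $k\ge3$, is positive (negative) if the points are pairwise distinct and listed in the counterclockwise (clockwise) order along $\mathrm SW$. *)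

theory Defs
  imports "HOL-Analysis.Analysis"
begin

text \<open>W = C^2 with hermitian form of signature (+,-), linear in the first argument.
Points of CP W are represented by nonzero vectors; two vectors give the same
point iff they are proportional.\<close>

type_synonym cvec = "complex ^ 2"
type_synonym cmat = "complex ^ 2 ^ 2"

definition herm :: "cvec \<Rightarrow> cvec \<Rightarrow> complex" where
  "herm v w = v$1 * cnj (w$1) - v$2 * cnj (w$2)"

definition proj_eq :: "cvec \<Rightarrow> cvec \<Rightarrow> bool" where
  "proj_eq v w \<longleftrightarrow> v \<noteq> 0 \<and> w \<noteq> 0 \<and> (\<exists>c. c \<noteq> 0 \<and> w = c *s v)"

text \<open>negative points (BW), isotropic points (SW), closed ball\<close>
definition negative_pt :: "cvec \<Rightarrow> bool" where
  "negative_pt v \<longleftrightarrow> v \<noteq> 0 \<and> Re (herm v v) < 0"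

definition isotropic_pt :: "cvec \<Rightarrow> bool" where
  "isotropic_pt v \<longleftrightarrow> v \<noteq> 0 \<and> herm v v = 0"

definition cball_pt :: "cvec \<Rightarrow> bool" where
  "cball_pt v \<longleftrightarrow> negative_pt v \<or> isotropic_pt v"

text \<open>U(W): matrices preserving the hermitian form; PU(W) = U(W) modulo scalars.\<close>
definition unitary_U :: "cmat \<Rightarrow> bool" where
  "unitary_U A \<longleftrightarrow> (\<forall>v w. herm (A *v v) (A *v w) = herm v w)"

definition pu_eq :: "cmat \<Rightarrow> cmat \<Rightarrow> bool" where
  "pu_eq A B \<longleftrightarrow> (\<exists>c. c \<noteq> 0 \<and> B = (\<chi> i j. c * A$i$j))"

text \<open>Reflection in q: v \<mapsto> 2<v,q>/<q,q> q - v (fixes q, acts as -1 on q^perp).\<close>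
definition sgnJ :: "2 \<Rightarrow> complex" where
  "sgnJ j = (if j = 1 then 1 else -1)"

definition refl_mat :: "cvec \<Rightarrow> cmat" where
  "refl_mat q = (\<chi> i j. 2 * q$i * cnj (q$j) * sgnJ j / herm q q - (if i = j then 1 else 0))"

definition fixes_pt :: "cmat \<Rightarrow> cvec \<Rightarrow> bool" where
  "fixes_pt A v \<longleftrightarrow> v \<noteq> 0 \<and> (\<exists>c. A *v v = c *s v)"

definition hyperbolic :: "cmat \<Rightarrow> bool" where
  "hyperbolic A \<longleftrightarrow> (\<exists>x y. isotropic_pt x \<and> isotropic_pt y \<and> \<not> proj_eq x y \<and>
      fixes_pt A x \<and> fixes_pt A y \<and>
      (\<forall>z. cball_pt z \<and> fixes_pt A z \<longrightarrow> proj_eq z x \<or> proj_eq z y))"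

definition tri_area :: "cvec \<Rightarrow> cvec \<Rightarrow> cvec \<Rightarrow> real" where
  "tri_area p1 p2 p3 =
    (if (isotropic_pt p1 \<and> proj_eq p1 p2) \<or> (isotropic_pt p2 \<and> proj_eq p2 p3)
        \<or> (isotropic_pt p3 \<and> proj_eq p3 p1) then 0
     else 2 * Arg (- (herm p1 p2 * herm p2 p3 * herm p3 p1)))"

definition poly_area :: "cvec \<Rightarrow> cvec list \<Rightarrow> real" where
  "poly_area c ps = (\<Sum>k<length ps. tri_area c (ps ! k) (ps ! ((k + 1) mod length ps)))"

text \<open>the centre of the disc, used as the (arbitrary) base points c and p_0\<close>
definition origin_pt :: cvec where
  "origin_pt = (\<chi> i. if i = 1 then 0 else 1)"

text \<open>A homomorphism H_n \<rightarrow> PU(W) is given by the images G i of the generators r_i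
(indices mod n, i.e. G is n-periodic), each in U(W), satisfying the relations
r_i^2 = 1 and r_n \<cdots> r_1 = 1 in PU(W).\<close>
fun lprod :: "(int \<Rightarrow> cmat) \<Rightarrow> nat \<Rightarrow> cmat" where
  "lprod G 0 = mat 1"
| "lprod G (Suc k) = G (int (Suc k)) ** lprod G k"

definition is_hom_H :: "nat \<Rightarrow> (int \<Rightarrow> cmat) \<Rightarrow> bool" where
  "is_hom_H n G \<longleftrightarrow> (\<forall>i. G (i + int n) = G i) \<and> (\<forall>i. unitary_U (G i)) \<and>
     (\<forall>i. pu_eq (mat 1) (G i ** G i)) \<and> pu_eq (mat 1) (lprod G n)"

fun orbit :: "(int \<Rightarrow> cmat) \<Rightarrow> cvec \<Rightarrow> nat \<Rightarrow> cvec" where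
  "orbit G p0 0 = p0"
| "orbit G p0 (Suc k) = G (int (Suc k)) *v orbit G p0 k"

definition area_rho :: "(int \<Rightarrow> cmat) \<Rightarrow> nat \<Rightarrow> real" where
  "area_rho G n = poly_area origin_pt (map (orbit G origin_pt) [1..<n+1])"

text \<open>chain G i x j = p_{i-2+j}, where p_{i-2} = x and p_k = G k p_{k-1}\<close>
fun chain :: "(int \<Rightarrow> cmat) \<Rightarrow> int \<Rightarrow> cvec \<Rightarrow> nat \<Rightarrow> cvec" where
  "chain G i x 0 = x"
| "chain G i x (Suc j) = G (i - 2 + int (Suc j)) *v chain G i x j"

text \<open>SW is identified with the unit circle via the holomorphic chart v \<mapsto> v1/v2 of CP W
(which maps BW onto the open unit disc, preserving the complex orientation).\<close>
definition bdry_coord :: "cvec \<Rightarrow> complex" where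
  "bdry_coord v = v$1 / v$2"

definition ccw_list :: "complex list \<Rightarrow> bool" where
  "ccw_list zs \<longleftrightarrow> (\<exists>\<theta>::nat \<Rightarrow> real.
     (\<forall>j. Suc j < length zs \<longrightarrow> \<theta> j < \<theta> (Suc j)) \<and>
     \<theta> (length zs - 1) < \<theta> 0 + 2 * pi \<and>
     (\<forall>j < length zs. zs ! j = cis (\<theta> j)))"

definition positive_cycle :: "cvec list \<Rightarrow> bool" where
  "positive_cycle ps \<longleftrightarrow> length ps \<ge> 3 \<and> (\<forall>p \<in> set ps. isotropic_pt p) \<and>
     (\<forall>j k. j < length ps \<and> k < length ps \<and> j \<noteq> k \<longrightarrow> \<not> proj_eq (ps ! j) (ps ! k)) \<and>
     ccw_list (map bdry_coord ps)"

end

theory Submission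
  imports Defs
begin

text \<open>
  The area of \<open>\<rho>\<close> is the area of the polygon traced by the orbit \<open>p\<^sub>k = \<rho>(r\<^sub>k) p\<^sub>k\<^sub>-\<^sub>1\<close> of
  any point of the closed disc: moving the starting point or the starting index changes the
  polygon by quadrilaterals \<open>x, \<rho>(r\<^sub>k) x, \<rho>(r\<^sub>k) y, y\<close> that an involution maps onto themselves with
  reversed orientation, so they have no area. If \<open>x\<close> is fixed by \<open>\<rho>(r\<^sub>i r\<^sub>i\<^sub>-\<^sub>1)\<close>, the orbit from
  \<open>p\<^sub>i\<^sub>-\<^sub>2 = x\<close> comes back after two steps, and \<open>Area \<rho>\<close> is the area of the \<open>(n - 2)\<close>-gon
  \<open>p\<^sub>i, \<dots>, p\<^sub>i\<^sub>+\<^sub>n\<^sub>-\<^sub>3\<close>. An \<open>m\<close>-gon with vertices in \<open>BW\<close> has area \<open>< (m - 2)\<pi>\<close>, and an \<open>m\<close>-gon with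
  vertices in \<open>SW\<close> and area \<open>(m - 2)\<pi>\<close> is a positive cycle. So \<open>\<rho>(r\<^sub>i r\<^sub>i\<^sub>-\<^sub>1)\<close> fixes no point of
  \<open>BW\<close>: then \<open>\<rho>(r\<^sub>i)\<close> is a non-trivial involution, i.e. a reflection \<open>R(q\<^sub>i)\<close>, consecutive centres
  differ, and the fixed points of the product are isotropic and exchanged by \<open>\<rho>(r\<^sub>i)\<close>, which
  fixes no isotropic point, so the product is hyperbolic.
\<close>

subsection \<open>The hermitian form\<close>

lemma vec2_eq_iff: "(v::cvec) = w \<longleftrightarrow> v$1 = w$1 \<and> v$2 = w$2"
  by (simp add: vec_eq_iff forall_2)

lemma vec2_nonzero_iff: "(v::cvec) \<noteq> 0 \<longleftrightarrow> v$1 \<noteq> 0 \<or> v$2 \<noteq> 0"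
  by (simp add: vec_eq_iff forall_2)

lemma matrix_vector_mult_nth2: "((A::cmat) *v v) $ i = A$i$1 * v$1 + A$i$2 * v$2"
  by (simp add: matrix_vector_mult_def sum_2)

lemma herm_scale_left: "herm (c *s v) w = c * herm v w"
  by (simp add: herm_def algebra_simps)

lemma herm_scale_right: "herm v (c *s w) = cnj c * herm v w"
  by (simp add: herm_def algebra_simps)

lemma cnj_herm: "cnj (herm v w) = herm w v"
  by (simp add: herm_def)

lemma herm_self: "herm v v = of_real ((cmod (v$1))\<^sup>2 - (cmod (v$2))\<^sup>2)"
  by (simp add: herm_def complex_norm_square[symmetric])

lemma herm_self_eq_Re: "herm v v = of_real (Re (herm v v))"
  by (simp add: herm_self)

lemma herm_zero_left [simp]: "herm 0 w = 0"
  and herm_zero_right [simp]: "herm v 0 = 0"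
  by (simp_all add: herm_def)

lemma herm_eq_0_commute: "herm v w = 0 \<longleftrightarrow> herm w v = 0"
  by (metis cnj_herm complex_cnj_zero_iff)

lemma herm_mult_swap: "herm v w * herm w v = of_real ((cmod (herm v w))\<^sup>2)"
  by (metis complex_norm_square cnj_herm)

lemma norm_herm_commute: "cmod (herm v w) = cmod (herm w v)"
  by (metis cnj_herm complex_mod_cnj)

lemma negative_ptD: "negative_pt v \<Longrightarrow> cball_pt v"
  by (simp add: cball_pt_def)

lemma isotropic_ptD: "isotropic_pt v \<Longrightarrow> cball_pt v"
  by (simp add: cball_pt_def)

lemma cball_pt_iff: "cball_pt v \<longleftrightarrow> v \<noteq> 0 \<and> Re (herm v v) \<le> 0"
  using herm_self_eq_Re[of v]
  by (auto simp: cball_pt_def negative_pt_def isotropic_pt_def) (metis of_real_0 order_less_le)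

lemma cball_pt_second_coord:
  assumes "cball_pt v"
  shows "v$2 \<noteq> 0" "cmod (v$1) \<le> cmod (v$2)"
proof -
  have "(cmod (v$1))\<^sup>2 \<le> (cmod (v$2))\<^sup>2"
    using assms by (simp add: cball_pt_iff herm_self)
  then show le: "cmod (v$1) \<le> cmod (v$2)"
    by (simp add: power2_le_iff_abs_le)
  show "v$2 \<noteq> 0"
    using assms le by (auto simp: cball_pt_iff vec2_nonzero_iff)
qed

lemma origin_pt_negative: "negative_pt origin_pt"
  by (simp add: negative_pt_def origin_pt_def herm_def vec2_eq_iff)

lemma herm_scale_self: "herm (l *s v) (l *s v) = of_real ((cmod l)\<^sup>2) * herm v v"
  by (simp add: herm_scale_left herm_scale_right mult_ac flip: complex_norm_square)

lemma unitary_herm: "unitary_U A \<Longrightarrow> herm (A *v v) (A *v w) = herm v w"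
  by (simp add: unitary_U_def)

lemma unitary_eq_0_iff:
  assumes "unitary_U A"
  shows "A *v v = 0 \<longleftrightarrow> v = 0"
proof
  assume "A *v v = 0"
  then have "herm v w = 0" for w
    using unitary_herm[OF assms, of v w] by simp
  from this[of "vector [1,0]"] this[of "vector [0,1]"] show "v = 0"
    by (simp add: herm_def vec2_eq_iff)
qed simp

lemma unitary_negative_pt: "unitary_U A \<Longrightarrow> negative_pt v \<Longrightarrow> negative_pt (A *v v)"
  by (simp add: negative_pt_def unitary_herm unitary_eq_0_iff)

lemma unitary_isotropic_pt: "unitary_U A \<Longrightarrow> isotropic_pt v \<Longrightarrow> isotropic_pt (A *v v)"
  by (simp add: isotropic_pt_def unitary_herm unitary_eq_0_iff)

lemma unitary_cball_pt: "unitary_U A \<Longrightarrow> cball_pt v \<Longrightarrow> cball_pt (A *v v)"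
  by (simp add: cball_pt_iff unitary_herm unitary_eq_0_iff)

lemma unitary_mult: "unitary_U A \<Longrightarrow> unitary_U B \<Longrightarrow> unitary_U (A ** B)"
  by (simp add: unitary_U_def matrix_vector_mul_assoc[symmetric])

lemma unitary_eigenvalue_nonzero:
  assumes "unitary_U A" "A *v v = l *s v" "v \<noteq> 0"
  shows "l \<noteq> 0"
  using assms unitary_eq_0_iff by force

text \<open>\<open>perp v\<close> spans the orthogonal complement of \<open>v\<close>.\<close>

definition perp :: "cvec \<Rightarrow> cvec" where
  "perp v = vector [cnj (v$2), cnj (v$1)]"

lemma perp_nth [simp]: "perp v $ 1 = cnj (v$2)" "perp v $ 2 = cnj (v$1)"
  by (simp_all add: perp_def)

lemma perp_eq_0_iff [simp]: "perp v = 0 \<longleftrightarrow> v = 0"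
  by (auto simp: vec2_eq_iff)

lemma herm_perp_self: "herm (perp v) (perp v) = - herm v v"
  by (simp add: herm_def)

lemma herm_perp_left: "herm (perp v) v = 0"
  by (simp add: herm_def mult.commute)

lemma herm_expansion: "herm q q *s x = herm x q *s q - herm x (perp q) *s perp q"
  by (simp add: vec2_eq_iff herm_def algebra_simps)

lemma herm_expansion_scalar:
  "herm q q * herm a b = herm a q * herm q b - herm a (perp q) * herm (perp q) b"
  by (simp add: herm_def algebra_simps)

lemma herm_eq_0_imp_perp:
  assumes "herm u v = 0" "v \<noteq> 0"
  shows "\<exists>t. u = t *s perp v"
proof (cases "v$2 = 0")
  case True
  then show ?thesis
    using assms by (intro exI[of _ "u$2 / cnj (v$1)"]) (auto simp: herm_def vec2_eq_iff vec2_nonzero_iff)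
next
  case False
  then show ?thesis
    using assms(1) by (intro exI[of _ "u$1 / cnj (v$2)"]) (simp add: herm_def vec2_eq_iff field_simps)
qed

lemma isotropic_perp:
  assumes "isotropic_pt v"
  shows "\<exists>s. s \<noteq> 0 \<and> perp v = s *s v"
proof -
  have v2: "v$2 \<noteq> 0"
    using assms by (simp add: isotropic_ptD cball_pt_second_coord)
  have "v$1 * cnj (v$1) = v$2 * cnj (v$2)"
    using assms by (simp add: isotropic_pt_def herm_def)
  then have "perp v = (cnj (v$1) / v$2) *s v"
    using v2 by (simp add: vec2_eq_iff field_simps)
  moreover have "perp v \<noteq> 0"
    using assms by (simp add: isotropic_pt_def)
  ultimately show ?thesis
    by (metis vector_smult_lzero)
qed

lemma herm_negative_cball_nonzero:
  assumes c: "negative_pt c" and x: "cball_pt x"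
  shows "herm x c \<noteq> 0"
proof
  assume "herm x c = 0"
  then obtain t where t: "x = t *s perp c"
    using herm_eq_0_imp_perp c by (auto simp: negative_pt_def)
  then have "t \<noteq> 0"
    using x by (auto simp: cball_pt_iff)
  then have "Re (herm x x) > 0"
    using c t by (simp add: negative_pt_def herm_scale_self herm_perp_self mult_pos_neg)
  then show False
    using x by (simp add: cball_pt_iff)
qed

lemma cball_herm_eq_0_imp_proportional:
  assumes x: "cball_pt x" and y: "cball_pt y" and h: "herm y x = 0"
  shows "\<exists>l. l \<noteq> 0 \<and> y = l *s x"
proof -
  obtain t where t: "y = t *s perp x"
    using herm_eq_0_imp_perp h x by (auto simp: cball_pt_iff)
  then have "t \<noteq> 0"
    using y by (auto simp: cball_pt_iff)
  have "Re (herm y y) = (cmod t)\<^sup>2 * - Re (herm x x)"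
    by (simp add: t herm_scale_self herm_perp_self)
  then have "Re (herm x x) = 0"
    using x y \<open>t \<noteq> 0\<close> mult_pos_pos[of "(cmod t)\<^sup>2" "- Re (herm x x)"]
    by (force simp: cball_pt_iff)
  then have "isotropic_pt x"
    using x herm_self_eq_Re[of x] by (simp add: cball_pt_iff isotropic_pt_def)
  then obtain s where "s \<noteq> 0" "perp x = s *s x"
    using isotropic_perp by blast
  then show ?thesis
    using t \<open>t \<noteq> 0\<close> by (intro exI[of _ "t * s"]) simp
qed

subsection \<open>Triangle and polygon areas\<close>

definition herm_triple :: "cvec \<Rightarrow> cvec \<Rightarrow> cvec \<Rightarrow> complex" where
  "herm_triple a b d = - (herm a b * herm b d * herm d a)"

lemma tri_area_eq_Arg: "tri_area a b d = 2 * Arg (herm_triple a b d)"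
proof -
  have "herm_triple a b d = 0" if "(isotropic_pt a \<and> proj_eq a b) \<or> (isotropic_pt b \<and> proj_eq b d)
        \<or> (isotropic_pt d \<and> proj_eq d a)"
    using that by (auto simp: herm_triple_def isotropic_pt_def proj_eq_def herm_scale_left herm_scale_right)
  then show ?thesis
    by (auto simp: tri_area_def Arg_zero herm_triple_def)
qed

lemma herm_triple_cnj: "herm_triple a d b = cnj (herm_triple a b d)"
  by (simp add: herm_triple_def cnj_herm mult_ac)

lemma herm_triple_unitary:
  "unitary_U A \<Longrightarrow> herm_triple (A *v a) (A *v b) (A *v d) = herm_triple a b d"
  by (simp add: herm_triple_def unitary_herm)

lemma herm_triple_scale:
  "herm_triple (l *s a) b d = of_real ((cmod l)\<^sup>2) * herm_triple a b d"
  "herm_triple a (l *s b) d = of_real ((cmod l)\<^sup>2) * herm_triple a b d"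
  "herm_triple a b (l *s d) = of_real ((cmod l)\<^sup>2) * herm_triple a b d"
  by (simp_all add: herm_triple_def herm_scale_left herm_scale_right mult_ac flip: complex_norm_square)

lemma tri_area_scale:
  assumes "l \<noteq> 0"
  shows "tri_area (l *s a) b d = tri_area a b d"
    and "tri_area a (l *s b) d = tri_area a b d"
    and "tri_area a b (l *s d) = tri_area a b d"
  using assms by (simp_all add: tri_area_eq_Arg herm_triple_scale del: of_real_power)

lemma tri_area_unitary: "unitary_U A \<Longrightarrow> tri_area (A *v a) (A *v b) (A *v d) = tri_area a b d"
  by (simp add: tri_area_eq_Arg herm_triple_unitary)

lemma Re_diff_pos_of_norm_le:
  assumes "cmod y \<le> x"
  shows "Re (of_real x - y) > 0 \<or> of_real x - y = 0"
proof (cases "Re y < x")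
  case False
  then have "Re y = x"
    using assms complex_Re_le_cmod[of y] by linarith
  moreover have "(Re y)\<^sup>2 + (Im y)\<^sup>2 \<le> x\<^sup>2"
    using assms by (simp add: cmod_power2[symmetric] power_mono)
  ultimately show ?thesis
    by (simp add: complex_eq_iff)
qed simp

lemma norm_herm_perp_le:
  assumes c: "negative_pt c" and u: "cball_pt u"
  shows "cmod (herm u (perp c)) \<le> cmod (herm u c)"
proof -
  have "complex_of_real (Re (herm c c) * Re (herm u u))
      = of_real ((cmod (herm u c))\<^sup>2 - (cmod (herm u (perp c)))\<^sup>2)"
    using herm_expansion_scalar[of c u u] herm_self_eq_Re[of u] herm_self_eq_Re[of c]
    by (simp add: herm_mult_swap)
  moreover have "Re (herm c c) * Re (herm u u) \<ge> 0"
    using c u by (simp add: cball_pt_iff negative_pt_def mult_nonpos_nonpos)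
  ultimately have "(cmod (herm u (perp c)))\<^sup>2 \<le> (cmod (herm u c))\<^sup>2"
    by (simp only: of_real_eq_iff)
  then show ?thesis
    by (simp add: power2_le_iff_abs_le)
qed

text \<open>
  With \<open>e = perp c\<close>, the expansion \<open>\<langle>c,c\<rangle>\<langle>a,b\<rangle> = \<langle>a,c\<rangle>\<langle>c,b\<rangle> - \<langle>a,e\<rangle>\<langle>e,b\<rangle>\<close> gives
  \<open>-\<langle>c,c\<rangle> T = |\<langle>a,c\<rangle>|\<^sup>2|\<langle>b,c\<rangle>|\<^sup>2 - Y\<close>, and \<open>|Y|\<close> is at most the first term by the previous lemma.
\<close>

lemma Re_herm_triple_pos:
  assumes c: "negative_pt c" and a: "cball_pt a" and b: "cball_pt b"
  shows "Re (herm_triple c a b) > 0 \<or> herm_triple c a b = 0"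
proof -
  define e where "e = perp c"
  define s where "s = - Re (herm c c)"
  have s: "s > 0" "herm c c = - of_real s"
    using c herm_self_eq_Re[of c] by (auto simp: s_def negative_pt_def)
  define X where "X = (cmod (herm a c))\<^sup>2 * (cmod (herm b c))\<^sup>2"
  define Y where "Y = herm c a * herm b c * herm a e * herm e b"
  have T: "herm_triple c a b = (of_real X - Y) / of_real s"
  proof -
    have "of_real s * herm_triple c a b = herm c a * herm b c * (herm c c * herm a b)"
      using s by (simp add: herm_triple_def mult_ac)
    also have "\<dots> = herm c a * herm b c * (herm a c * herm c b - herm a e * herm e b)"
      by (simp add: herm_expansion_scalar e_def cnj_herm)
    also have "\<dots> = of_real X - Y"
      unfolding X_def Y_def of_real_mult herm_mult_swap[symmetric] by (simp add: cnj_herm algebra_simps)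
    finally show ?thesis
      using s by (simp add: field_simps)
  qed
  have "cmod Y \<le> X"
  proof -
    have "cmod Y = cmod (herm a c) * cmod (herm b c) * cmod (herm a e) * cmod (herm b e)"
      by (simp add: Y_def norm_mult norm_herm_commute[of c a] norm_herm_commute[of e b])
    also have "\<dots> \<le> cmod (herm a c) * cmod (herm b c) * cmod (herm a c) * cmod (herm b c)"
      using norm_herm_perp_le[OF c a] norm_herm_perp_le[OF c b] by (intro mult_mono) (auto simp: e_def)
    finally show ?thesis
      by (simp add: X_def power2_eq_square mult_ac)
  qed
  then have "Re (of_real X - Y) > 0 \<or> of_real X - Y = 0"
    by (rule Re_diff_pos_of_norm_le)
  then show ?thesis
    using T s by auto
qed

lemma abs_Arg_herm_triple_less:
  assumes "negative_pt c" "cball_pt a" "cball_pt b"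
  shows "\<bar>Arg (herm_triple c a b)\<bar> < pi / 2"
  using Re_herm_triple_pos[OF assms] Arg_Re_pos by blast

lemma abs_tri_area_less:
  assumes "negative_pt c" "cball_pt a" "cball_pt b"
  shows "\<bar>tri_area c a b\<bar> < pi"
  using abs_Arg_herm_triple_less[OF assms] by (simp add: tri_area_eq_Arg)

lemma tri_area_swap:
  assumes "negative_pt c" "cball_pt a" "cball_pt b"
  shows "tri_area c b a = - tri_area c a b"
proof -
  have "herm_triple c a b \<in> \<real> \<Longrightarrow> Arg (herm_triple c a b) = 0"
    using Re_herm_triple_pos[OF assms] by (auto simp: Arg_real)
  then show ?thesis
    by (auto simp: tri_area_eq_Arg herm_triple_cnj[of c b a] Arg_cnj)
qed

lemma tri_area_repeated_base:
  assumes c: "negative_pt c"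
  shows "tri_area c c x = 0"
proof -
  define r where "r = - Re (herm c c) * (cmod (herm c x))\<^sup>2"
  have "herm_triple c c x = of_real r"
    using herm_self_eq_Re[of c] by (simp add: r_def herm_triple_def herm_mult_swap mult.assoc)
  moreover have "r \<ge> 0"
    using c by (simp add: r_def negative_pt_def mult_nonpos_nonneg)
  ultimately show ?thesis
    by (simp add: tri_area_eq_Arg)
qed

lemma Arg_add_eq_Arg_add:
  assumes "z1 * z2 * of_real r1 = z3 * z4 * of_real r2" "r1 > 0" "r2 > 0"
    and "z1 \<noteq> 0" "z2 \<noteq> 0" "z3 \<noteq> 0" "z4 \<noteq> 0"
    and "\<bar>Arg z1\<bar> < pi/2" "\<bar>Arg z2\<bar> < pi/2" "\<bar>Arg z3\<bar> < pi/2" "\<bar>Arg z4\<bar> < pi/2"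
  shows "Arg z1 + Arg z2 = Arg z3 + Arg z4"
proof -
  have "Arg (z1 * z2) = Arg z1 + Arg z2" "Arg (z3 * z4) = Arg z3 + Arg z4"
    using assms by (auto intro!: Arg_times)
  moreover have "Arg (z1 * z2) = Arg (z3 * z4)"
    using assms(1-3) Arg_times_of_real2 by metis
  ultimately show ?thesis
    by simp
qed

lemma tri_area_base_change:
  assumes c: "negative_pt c" and c': "negative_pt c'" and x: "cball_pt x" and y: "cball_pt y"
  shows "tri_area c' x y - tri_area c x y = tri_area c c' x - tri_area c c' y"
proof (cases "herm x y = 0")
  case True
  then obtain l where "l \<noteq> 0" "x = l *s y"
    using cball_herm_eq_0_imp_proportional[OF y x] by auto
  moreover have "tri_area c' x y = 0" "tri_area c x y = 0"
    using True by (simp_all add: tri_area_eq_Arg herm_triple_def Arg_zero)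
  ultimately show ?thesis
    by (simp add: tri_area_scale)
next
  case False
  have nz: "herm c' x \<noteq> 0" "herm c' y \<noteq> 0" "herm c x \<noteq> 0" "herm c y \<noteq> 0" "herm c c' \<noteq> 0"
    "herm x c' \<noteq> 0" "herm y c' \<noteq> 0" "herm x c \<noteq> 0" "herm y c \<noteq> 0" "herm c' c \<noteq> 0"
    using herm_negative_cball_nonzero herm_eq_0_commute c c' x y negative_ptD by metis+
  have eq: "herm_triple c' x y * herm_triple c c' y * of_real ((cmod (herm c x))\<^sup>2)
      = herm_triple c x y * herm_triple c c' x * of_real ((cmod (herm y c'))\<^sup>2)"
    unfolding herm_mult_swap[symmetric] herm_triple_def by algebra
  have "Arg (herm_triple c' x y) + Arg (herm_triple c c' y)
      = Arg (herm_triple c x y) + Arg (herm_triple c c' x)"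
    by (rule Arg_add_eq_Arg_add[OF eq],
        simp_all only: abs_Arg_herm_triple_less c c' x y negative_ptD)
       (use False nz in \<open>simp_all add: herm_triple_def\<close>)
  then show ?thesis
    by (simp add: tri_area_eq_Arg)
qed

lemma sum_mod_rotate:
  assumes "m > 0"
  shows "(\<Sum>k<m. f (Suc k mod m)) = (\<Sum>k<m. f k :: 'a :: comm_monoid_add)"
proof -
  obtain m' where m: "m = Suc m'"
    using assms by (cases m) auto
  have "(\<Sum>k<Suc m'. f (Suc k mod Suc m')) = (\<Sum>k<m'. f (Suc k)) + f 0"
    by simp
  also have "\<dots> = (\<Sum>k<Suc m'. f k)"
    by (simp only: sum.lessThan_Suc_shift add.commute)
  finally show ?thesis
    using m by simp
qed

lemma prod_mod_rotate:
  assumes "m > 0"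
  shows "(\<Prod>k<m. f (Suc k mod m)) = (\<Prod>k<m. f k :: 'a :: comm_monoid_mult)"
proof -
  obtain m' where m: "m = Suc m'"
    using assms by (cases m) auto
  have "(\<Prod>k<Suc m'. f (Suc k mod Suc m')) = (\<Prod>k<m'. f (Suc k)) * f 0"
    by simp
  also have "\<dots> = (\<Prod>k<Suc m'. f k)"
    by (simp only: prod.lessThan_Suc_shift mult.commute)
  finally show ?thesis
    using m by simp
qed

lemma poly_area_base_change:
  assumes c: "negative_pt c" and c': "negative_pt c'" and ps: "\<forall>p\<in>set ps. cball_pt p"
  shows "poly_area c ps = poly_area c' ps"
proof (cases "ps = []")
  case False
  define m where "m = length ps"
  have m: "m > 0"
    using False by (simp add: m_def)
  have "poly_area c' ps - poly_area c ps =
        (\<Sum>k<m. tri_area c c' (ps ! k) - tri_area c c' (ps ! ((k + 1) mod m)))"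
    unfolding poly_area_def m_def[symmetric] sum_subtractf[symmetric]
    by (rule sum.cong[OF refl], rule tri_area_base_change[OF c c']) (use ps m in \<open>auto simp: m_def\<close>)
  also have "\<dots> = 0"
    using sum_mod_rotate[OF m, of "\<lambda>k. tri_area c c' (ps ! k)"] by (simp add: sum_subtractf)
  finally show ?thesis
    by simp
qed (simp add: poly_area_def)

text \<open>
  With a vertex as base point, the two fan triangles at that vertex are degenerate and each of
  the other \<open>m - 2\<close> has area less than \<open>\<pi>\<close>.
\<close>

lemma poly_area_negative_less:
  assumes m: "length ps \<ge> 3" and neg: "\<forall>p\<in>set ps. negative_pt p"
  shows "poly_area (ps ! 0) ps < (real (length ps) - 2) * pi"
proof -
  define m where "m = length ps"
  define c where "c = ps ! 0"
  define a where "a k = tri_area c (ps ! k) (ps ! ((k + 1) mod m))" for k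
  have m3: "m \<ge> 3"
    using m by (simp add: m_def)
  have negk: "negative_pt (ps ! k)" if "k < m" for k
    using neg that by (simp add: m_def)
  have c: "negative_pt c"
    using negk[of 0] m3 by (simp add: c_def)
  have "a k = 0" if "k \<in> {..<m} - {1..<m - 1}" for k
  proof -
    have "k = 0 \<or> k = m - 1"
      using that by auto
    then show ?thesis
      using m3 c negk[of "m - 1"] tri_area_repeated_base[OF c] tri_area_swap[OF c] negative_ptD
      by (auto simp: a_def c_def)
  qed
  then have "(\<Sum>k<m. a k) = (\<Sum>k\<in>{1..<m - 1}. a k)"
    by (intro sum.mono_neutral_right) auto
  also have "\<dots> < (\<Sum>k\<in>{1..<m - 1}. pi)"
  proof (rule sum_strict_mono)
    fix k assume "k \<in> {1..<m - 1}"
    then have "\<bar>a k\<bar> < pi"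
      unfolding a_def by (intro abs_tri_area_less c negative_ptD negk) auto
    then show "a k < pi"
      by simp
  qed (use m3 in auto)
  also have "\<dots> = (real m - 2) * pi"
    using m3 by simp
  finally show ?thesis
    by (simp add: poly_area_def a_def m_def c_def)
qed

subsection \<open>Ideal polygons of maximal area\<close>

lemma tri_area_origin_pt:
  assumes a: "cball_pt a" and b: "cball_pt b"
  shows "tri_area origin_pt a b = 2 * Arg (1 - bdry_coord a * cnj (bdry_coord b))"
proof -
  have a2: "a$2 \<noteq> 0" and b2: "b$2 \<noteq> 0"
    using cball_pt_second_coord a b by auto
  have "herm_triple origin_pt a b
      = of_real ((cmod (a$2))\<^sup>2 * (cmod (b$2))\<^sup>2) * (1 - bdry_coord a * cnj (bdry_coord b))"
    unfolding of_real_mult complex_norm_square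
    using a2 b2 by (simp add: herm_triple_def herm_def origin_pt_def bdry_coord_def field_simps)
  then show ?thesis
    using a2 b2 by (simp add: tri_area_eq_Arg del: of_real_mult of_real_power)
qed

lemma norm_bdry_coord:
  assumes "isotropic_pt v"
  shows "cmod (bdry_coord v) = 1"
proof -
  have "Re (herm v v) = 0"
    using assms by (simp add: isotropic_pt_def)
  then have "(cmod (v$1))\<^sup>2 = (cmod (v$2))\<^sup>2"
    by (simp add: herm_self)
  then have "cmod (v$1) = cmod (v$2)"
    by simp
  then show ?thesis
    using cball_pt_second_coord[OF isotropic_ptD[OF assms]] by (simp add: bdry_coord_def norm_divide)
qed

lemma Arg_one_minus_cis:
  assumes "0 < \<phi>" "\<phi> < 2 * pi"
  shows "2 * Arg (1 - cis (- \<phi>)) = pi - \<phi>"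
proof -
  define t where "t = \<phi> / 2"
  have t: "0 < t" "t < pi" and \<phi>: "\<phi> = 2 * t"
    using assms by (auto simp: t_def)
  have "1 - cis (- \<phi>) = rcis (2 * sin t) (pi / 2 - t)"
    unfolding \<phi> by (simp add: complex_eq_iff rcis_def cos_diff sin_diff cos_double_sin
        sin_double power2_eq_square)
  moreover have "pi / 2 - t \<in> {-pi<..pi}" "sin t > 0"
    using t by (auto intro: sin_gt_zero)
  ultimately show ?thesis
    by (simp add: Arg_rcis t_def)
qed

lemma cis_sum: "cis (\<Sum>k\<in>A. f k) = (\<Prod>k\<in>A. cis (f k))"
  by (induction A rule: infinite_finite_induct) (simp_all add: cis_mult[symmetric])

lemma cis_eq_1_iff: "cis x = 1 \<longleftrightarrow> (\<exists>n::int. x = of_int n * (2 * pi))"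
proof
  assume "cis x = 1"
  then have "cos x = 1"
    by (metis cis.sel(1) one_complex.sel(1))
  then show "\<exists>n::int. x = of_int n * (2 * pi)"
    by (auto simp: cos_one_2pi_int mult.assoc)
qed (metis cis_multiple_2pi Ints_of_int mult.commute)

lemma cis_neq_1:
  assumes "0 < x" "x < 2 * pi"
  shows "cis x \<noteq> 1"
proof
  assume "cis x = 1"
  then obtain n :: int where "x = of_int n * (2 * pi)"
    by (auto simp: cis_eq_1_iff)
  then have "0 < n" "n < 1"
    using assms by (simp_all add: zero_less_mult_iff mult_less_cancel_right2)
  then show False
    by simp
qed

lemma unit_complex_eq_cis:
  assumes "cmod w = 1"
  obtains \<phi> where "0 \<le> \<phi>" "\<phi> < 2 * pi" "cis \<phi> = w"
proof -
  have "w \<noteq> 0"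
    using assms by auto
  then have "cis (Arg w) = w"
    using assms by (simp add: cis_Arg sgn_div_norm)
  then show ?thesis
    using Arg_bounded[of w] that[of "Arg w"] that[of "Arg w + 2 * pi"]
    by (cases "Arg w \<ge> 0") (auto simp: cis_mult[symmetric])
qed

lemma unit_angle_step:
  assumes a: "cmod a = 1" and b: "cmod b = 1"
  obtains \<phi> where "0 \<le> \<phi>" "\<phi> < 2 * pi" "b = a * cis \<phi>"
    and "2 * Arg (1 - a * cnj b) = pi - \<phi> - (if \<phi> = 0 then pi else 0)"
proof -
  have a_cnj: "a * cnj a = 1"
    using a by (simp add: complex_norm_square[symmetric])
  have "cmod (b * cnj a) = 1"
    using a b by (simp add: norm_mult)
  then obtain \<phi> where \<phi>: "0 \<le> \<phi>" "\<phi> < 2 * pi" "cis \<phi> = b * cnj a"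
    by (blast elim: unit_complex_eq_cis)
  then have "b = a * cis \<phi>"
    using a_cnj by (simp add: mult.commute mult.left_commute)
  moreover have "a * cnj b = cis (- \<phi>)"
    using a_cnj by (simp add: \<open>b = a * cis \<phi>\<close> mult.assoc flip: cis_cnj)
  then have "2 * Arg (1 - a * cnj b) = pi - \<phi> - (if \<phi> = 0 then pi else 0)"
    using Arg_one_minus_cis[of \<phi>] \<phi> by (auto simp: Arg_zero)
  ultimately show ?thesis
    using that \<phi> by blast
qed

text \<open>
  The steps \<open>\<phi>\<^sub>k \<in> [0, 2\<pi>)\<close> of a closed polygon add up to \<open>2\<pi>W\<close>; the area condition reads
  \<open>2W + Z = 2\<close>, where \<open>Z\<close> is the number of zero steps, and \<open>W = 0\<close> would force all \<open>m \<ge> 3\<close>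
  steps to vanish.
\<close>

lemma angle_sum_winding:
  fixes \<phi> :: "nat \<Rightarrow> real" and W :: int
  assumes m3: "m \<ge> 3" and \<phi>: "\<And>k. k < m \<Longrightarrow> 0 \<le> \<phi> k"
    and W: "(\<Sum>k<m. \<phi> k) = of_int W * (2 * pi)"
    and S: "(\<Sum>k<m. pi - \<phi> k - (if \<phi> k = 0 then pi else 0)) = (real m - 2) * pi"
  shows "(\<Sum>k<m. \<phi> k) = 2 * pi \<and> (\<forall>k<m. \<phi> k > 0)"
proof -
  define Z where "Z = card {k \<in> {..<m}. \<phi> k = 0}"
  have "(real m - 2) * pi = real m * pi - of_int W * (2 * pi) - real Z * pi"
    by (simp add: S[symmetric] sum_subtractf W Z_def sum.inter_filter[symmetric])
  then have "pi * real_of_int (2 * W + int Z) = pi * 2"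
    by (simp add: algebra_simps)
  then have WZ: "2 * W + int Z = 2"
    by simp
  have "(\<Sum>k<m. \<phi> k) \<ge> 0"
    using \<phi> by (intro sum_nonneg) auto
  then have "W \<ge> 0"
    using W pi_gt_zero by (simp add: zero_le_mult_iff)
  have "W = 1"
  proof (rule ccontr)
    assume "W \<noteq> 1"
    then have "W = 0"
      using WZ \<open>W \<ge> 0\<close> by linarith
    then have "{k \<in> {..<m}. \<phi> k = 0} = {..<m}"
      using W \<phi> sum_nonneg_eq_0_iff[of "{..<m}" \<phi>] by auto
    then show False
      using WZ \<open>W = 0\<close> m3 Z_def by auto
  qed
  then have "Z = 0"
    using WZ by simp
  then have "\<phi> k \<noteq> 0" if "k < m" for k
    using that by (auto simp: Z_def)
  then show ?thesis
    using W \<open>W = 1\<close> \<phi> by (auto simp: order_less_le)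
qed

lemma angle_steps_of_area_sum:
  fixes u :: "nat \<Rightarrow> complex"
  assumes m3: "m \<ge> 3" and u1: "\<And>k. k < m \<Longrightarrow> cmod (u k) = 1"
    and S: "(\<Sum>k<m. 2 * Arg (1 - u k * cnj (u (Suc k mod m)))) = (real m - 2) * pi"
  obtains \<phi> where "\<And>k. k < m \<Longrightarrow> u (Suc k mod m) = u k * cis (\<phi> k)"
    and "\<And>k. k < m \<Longrightarrow> \<phi> k > 0" and "(\<Sum>k<m. \<phi> k) = 2 * pi"
proof -
  have "\<exists>\<phi>. 0 \<le> \<phi> \<and> u (Suc k mod m) = u k * cis \<phi>
      \<and> 2 * Arg (1 - u k * cnj (u (Suc k mod m))) = pi - \<phi> - (if \<phi> = 0 then pi else 0)"
    if k: "k < m" for k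
  proof -
    have k': "Suc k mod m < m"
      using m3 by simp
    obtain \<phi> where "0 \<le> \<phi>" "u (Suc k mod m) = u k * cis \<phi>"
      "2 * Arg (1 - u k * cnj (u (Suc k mod m))) = pi - \<phi> - (if \<phi> = 0 then pi else 0)"
      using unit_angle_step[OF u1[OF k] u1[OF k']] by blast
    then show ?thesis
      by blast
  qed
  then obtain \<phi> where \<phi>: "\<And>k. k < m \<Longrightarrow> 0 \<le> \<phi> k \<and> u (Suc k mod m) = u k * cis (\<phi> k)
      \<and> 2 * Arg (1 - u k * cnj (u (Suc k mod m))) = pi - \<phi> k - (if \<phi> k = 0 then pi else 0)"
    by metis
  have "cis (\<Sum>k<m. \<phi> k) * (\<Prod>k<m. u k) = (\<Prod>k<m. u (Suc k mod m))"
    by (simp add: cis_sum \<phi> prod.distrib[symmetric] mult.commute)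
  also have "\<dots> = (\<Prod>k<m. u k)"
    using prod_mod_rotate[of m u] m3 by simp
  moreover have "(\<Prod>k<m. u k) \<noteq> 0"
    using u1 by (metis lessThan_iff norm_zero prod_zero_iff finite_lessThan zero_neq_one)
  ultimately have "cis (\<Sum>k<m. \<phi> k) = 1"
    by simp
  then obtain W :: int where "(\<Sum>k<m. \<phi> k) = of_int W * (2 * pi)"
    using cis_eq_1_iff by blast
  moreover have "(\<Sum>k<m. pi - \<phi> k - (if \<phi> k = 0 then pi else 0))
      = (\<Sum>k<m. 2 * Arg (1 - u k * cnj (u (Suc k mod m))))"
    by (rule sum.cong[OF refl]) (metis \<phi> lessThan_iff)
  ultimately show ?thesis
    using angle_sum_winding[OF m3] \<phi> S that by (metis (no_types, lifting))
qed

lemma eq_cis_partial_sum: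
  fixes u :: "nat \<Rightarrow> complex" and \<phi> :: "nat \<Rightarrow> real"
  assumes u0: "cmod (u 0) = 1" and step: "\<And>k. Suc k < m \<Longrightarrow> u (Suc k) = u k * cis (\<phi> k)"
  shows "j < m \<Longrightarrow> u j = cis (Arg (u 0) + (\<Sum>k<j. \<phi> k))"
proof (induction j)
  case 0
  have "u 0 \<noteq> 0"
    using u0 by auto
  then show ?case
    using u0 by (simp add: cis_Arg sgn_div_norm)
next
  case (Suc j)
  then show ?case
    using step[of j] by (simp add: cis_mult add.assoc)
qed

lemma ccw_list_of_angle_steps:
  fixes u :: "nat \<Rightarrow> complex" and \<phi> :: "nat \<Rightarrow> real"
  assumes u0: "cmod (u 0) = 1"
    and step: "\<And>k. Suc k < m \<Longrightarrow> u (Suc k) = u k * cis (\<phi> k)"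
    and pos: "\<And>k. k < m \<Longrightarrow> \<phi> k > 0" and total: "(\<Sum>k<m. \<phi> k) = 2 * pi"
  shows "ccw_list (map u [0..<m])" and "inj_on u {..<m}"
proof -
  define \<theta> where "\<theta> j = Arg (u 0) + (\<Sum>k<j. \<phi> k)" for j
  have u_\<theta>: "u j = cis (\<theta> j)" if "j < m" for j
    unfolding \<theta>_def by (rule eq_cis_partial_sum[OF u0 step that])
  have \<theta>_less: "\<theta> j < \<theta> k" if "j < k" "k \<le> m" for j k
  proof -
    have "(\<Sum>l\<in>{0..<k}. \<phi> l) - (\<Sum>l\<in>{0..<j}. \<phi> l) = (\<Sum>l\<in>{j..<k}. \<phi> l)"
      using that by (intro sum_diff_nat_ivl) auto
    also have "\<dots> > 0"
      using that pos by (intro sum_pos) auto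
    finally show ?thesis
      by (simp add: \<theta>_def atLeast0LessThan)
  qed
  have \<theta>_m: "\<theta> m = \<theta> 0 + 2 * pi"
    by (simp add: \<theta>_def total)
  show "ccw_list (map u [0..<m])"
    unfolding ccw_list_def
  proof (intro exI[of _ \<theta>] conjI allI impI)
    show "\<theta> (length (map u [0..<m]) - 1) < \<theta> 0 + 2 * pi"
      using \<theta>_less[of "m - 1" m] \<theta>_m by (cases m) auto
  qed (auto simp: \<theta>_less u_\<theta>)
  show "inj_on u {..<m}"
  proof (rule linorder_inj_onI)
    fix j k assume jk: "j < k" "k \<in> {..<m}"
    have "0 < \<theta> k - \<theta> j"
      using jk \<theta>_less[of j k] by simp
    moreover have "\<theta> k - \<theta> j < 2 * pi"
      using jk \<theta>_less[of k m] \<theta>_less[of 0 j] \<theta>_m by (cases "j = 0") auto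
    ultimately show "u j \<noteq> u k"
      using jk cis_neq_1[of "\<theta> k - \<theta> j"] by (simp add: u_\<theta> cis_divide[symmetric])
  qed auto
qed

lemma bdry_coord_proj_eq: "proj_eq v w \<Longrightarrow> bdry_coord v = bdry_coord w"
  by (auto simp: proj_eq_def bdry_coord_def)

lemma positive_cycle_of_poly_area:
  assumes len: "length ps \<ge> 3" and iso: "\<forall>p\<in>set ps. isotropic_pt p"
    and area: "poly_area origin_pt ps = (real (length ps) - 2) * pi"
  shows "positive_cycle ps"
proof -
  define m where "m = length ps"
  define u where "u k = bdry_coord (ps ! k)" for k
  have m3: "m \<ge> 3"
    using len by (simp add: m_def)
  have iso_k: "isotropic_pt (ps ! k)" if "k < m" for k
    using iso that by (simp add: m_def)
  have unit: "cmod (u k) = 1" if "k < m" for k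
    using iso_k[OF that] by (simp add: u_def norm_bdry_coord)
  have "(\<Sum>k<m. 2 * Arg (1 - u k * cnj (u (Suc k mod m)))) = poly_area origin_pt ps"
    unfolding poly_area_def m_def[symmetric]
    using m3 iso_k by (intro sum.cong refl) (simp add: u_def tri_area_origin_pt isotropic_ptD)
  then have "(\<Sum>k<m. 2 * Arg (1 - u k * cnj (u (Suc k mod m)))) = (real m - 2) * pi"
    using area by (simp add: m_def)
  then obtain \<phi> where step: "\<And>k. k < m \<Longrightarrow> u (Suc k mod m) = u k * cis (\<phi> k)"
    and pos: "\<And>k. k < m \<Longrightarrow> \<phi> k > 0" and total: "(\<Sum>k<m. \<phi> k) = 2 * pi"
    using angle_steps_of_area_sum[where u = u, OF m3 unit] by blast
  have "u (Suc k) = u k * cis (\<phi> k)" if "Suc k < m" for k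
    using step[of k] that by simp
  then have ccw: "ccw_list (map u [0..<m])" and inj: "inj_on u {..<m}"
    using ccw_list_of_angle_steps[of u m \<phi>] unit[of 0] m3 pos total by auto
  have "map u [0..<m] = map bdry_coord ps"
    by (rule nth_equalityI) (simp_all add: u_def m_def)
  moreover have "\<not> proj_eq (ps ! j) (ps ! k)" if "j < m" "k < m" "j \<noteq> k" for j k
    using inj_onD[OF inj, of j k] that bdry_coord_proj_eq by (auto simp: u_def)
  ultimately show ?thesis
    unfolding positive_cycle_def using len iso ccw by (simp add: m_def)
qed

subsection \<open>Orbits of a homomorphism\<close>

lemma poly_area_4:
  "poly_area c [a, b, d, e] = tri_area c a b + tri_area c b d + tri_area c d e + tri_area c e a"
proof -
  have "{..<length [a, b, d, e]} = {0, 1, 2, 3}"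
    by auto
  then show ?thesis
    by (simp add: poly_area_def)
qed

text \<open>
  An involution \<open>A\<close> maps the quadrilateral \<open>x, Ax, Ay, y\<close> onto itself with the orientation
  reversed, so its area vanishes.
\<close>

lemma poly_area_involution_quadrilateral:
  assumes A: "unitary_U A" and inv: "\<And>v. A *v (A *v v) = k *s v" and k: "k \<noteq> 0"
    and x: "cball_pt x" and y: "cball_pt y"
  shows "poly_area origin_pt [x, A *v x, A *v y, y] = 0"
proof -
  define c where "c = A *v origin_pt"
  have c: "negative_pt c"
    using unitary_negative_pt[OF A origin_pt_negative] by (simp add: c_def)
  have Ax: "cball_pt (A *v x)" and Ay: "cball_pt (A *v y)"
    using unitary_cball_pt[OF A] x y by auto
  have moved: "tri_area origin_pt a b = tri_area c (A *v a) (A *v b)" for a b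
    using tri_area_unitary[OF A] by (simp add: c_def)
  have "poly_area origin_pt [x, A *v x, A *v y, y] = poly_area c [A *v x, x, y, A *v y]"
    by (simp only: poly_area_4 moved inv tri_area_scale[OF k])
  also have "\<dots> = - poly_area c [x, A *v x, A *v y, y]"
    using tri_area_swap[OF c x Ax] tri_area_swap[OF c Ax Ay] tri_area_swap[OF c Ay y]
      tri_area_swap[OF c y x]
    by (simp add: poly_area_4)
  also have "\<dots> = - poly_area origin_pt [x, A *v x, A *v y, y]"
    using poly_area_base_change[OF origin_pt_negative c] x y Ax Ay by simp
  finally show ?thesis
    by simp
qed

text \<open>\<open>walk G s y j\<close> is the point \<open>p\<^sub>s\<^sub>+\<^sub>j\<close> of the orbit \<open>p\<^sub>k = G k p\<^sub>k\<^sub>-\<^sub>1\<close> started at \<open>p\<^sub>s = y\<close>.\<close>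

fun walk :: "(int \<Rightarrow> cmat) \<Rightarrow> int \<Rightarrow> cvec \<Rightarrow> nat \<Rightarrow> cvec" where
  "walk G s y 0 = y"
| "walk G s y (Suc j) = G (s + int (Suc j)) *v walk G s y j"

definition walk_area :: "(int \<Rightarrow> cmat) \<Rightarrow> nat \<Rightarrow> int \<Rightarrow> cvec \<Rightarrow> real" where
  "walk_area G n s y = (\<Sum>j<n. tri_area origin_pt (walk G s y j) (walk G s y (Suc j)))"

definition walk_scalar :: "(int \<Rightarrow> cmat) \<Rightarrow> nat \<Rightarrow> int \<Rightarrow> bool" where
  "walk_scalar G n s \<longleftrightarrow> (\<exists>\<mu>. \<mu> \<noteq> 0 \<and> (\<forall>y. walk G s y n = \<mu> *s y))"

lemma chain_eq_walk: "chain G i x j = walk G (i - 2) x j"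
  by (induction j) simp_all

lemma orbit_eq_walk: "orbit G p j = walk G 0 p j"
  by (induction j) simp_all

lemma walk_0_eq_lprod: "walk G 0 y j = lprod G j *v y"
  by (induction j) (simp_all add: matrix_vector_mul_assoc)

lemma walk_Suc_start: "walk G (s + 1) (G (s + 1) *v y) j = walk G s y (Suc j)"
  by (induction j) (simp_all add: algebra_simps)

lemma walk_unitary:
  assumes "\<And>i. unitary_U (G i)"
  shows "cball_pt y \<Longrightarrow> cball_pt (walk G s y j)"
    and "negative_pt y \<Longrightarrow> negative_pt (walk G s y j)"
    and "isotropic_pt y \<Longrightarrow> isotropic_pt (walk G s y j)"
  by (induction j) (simp_all add: assms unitary_cball_pt unitary_negative_pt unitary_isotropic_pt)

lemma poly_area_map_upt:
  assumes "l \<noteq> 0" "q (a + m) = l *s q a"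
  shows "poly_area c (map q [a..<a + m]) = (\<Sum>k<m. tri_area c (q (a + k)) (q (a + Suc k)))"
  unfolding poly_area_def
proof (intro sum.cong)
  fix k assume "k \<in> {..<m}"
  then have k: "k < m"
    by simp
  then have "q (a + Suc k) = (if Suc k = m then l else 1) *s q (a + Suc k mod m)"
    using assms by auto
  then show "tri_area c (map q [a..<a + m] ! k) (map q [a..<a + m] ! ((k + 1) mod length (map q [a..<a + m])))
      = tri_area c (q (a + k)) (q (a + Suc k))"
    using k assms(1) by (simp add: tri_area_scale)
qed simp

lemma pu_eq_mat_1E:
  assumes "pu_eq (mat 1) M"
  obtains c where "c \<noteq> 0" "\<And>v. M *v v = c *s v"
  using assms by (auto simp: pu_eq_def vec2_eq_iff matrix_vector_mult_nth2 mat_def)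

locale H_hom =
  fixes n :: nat and G :: "int \<Rightarrow> cmat"
  assumes hom: "is_hom_H n G"
begin

lemma G_periodic: "G (i + int n) = G i"
  using hom by (simp add: is_hom_H_def)

lemma G_unitary: "unitary_U (G i)"
  using hom by (simp add: is_hom_H_def)

lemma G_involution: obtains k where "k \<noteq> 0" "\<And>v. G i *v (G i *v v) = k *s v"
proof -
  have "pu_eq (mat 1) (G i ** G i)"
    using hom by (simp add: is_hom_H_def)
  then show ?thesis
    using that by (auto simp: matrix_vector_mul_assoc elim: pu_eq_mat_1E)
qed

lemma walk_step_conj: "walk G s (G s *v y) n = G s *v walk G (s - 1) y n"
proof -
  have "walk G s (G s *v y) n = walk G (s - 1) y (Suc n)"
    using walk_Suc_start[of G "s - 1" y n] by simp
  also have "\<dots> = G s *v walk G (s - 1) y n"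
    using G_periodic[of s] by (simp add: add.commute)
  finally show ?thesis .
qed

lemma walk_scalar_0: "walk_scalar G n 0"
proof -
  have "pu_eq (mat 1) (lprod G n)"
    using hom by (simp add: is_hom_H_def)
  then show ?thesis
    unfolding walk_scalar_def by (auto simp: walk_0_eq_lprod elim: pu_eq_mat_1E)
qed

lemma walk_scalar_pred_iff: "walk_scalar G n (s - 1) \<longleftrightarrow> walk_scalar G n s"
proof -
  obtain k where k: "k \<noteq> 0" "\<And>v. G s *v (G s *v v) = k *s v"
    using G_involution by blast
  have surj: "\<exists>w. v = G s *v w" for v
    using k by (intro exI[of _ "(1 / k) *s (G s *v v)"]) (simp add: vector_scalar_commute)
  have inj: "v = w" if "G s *v v = G s *v w" for v w
    using that unitary_eq_0_iff[OF G_unitary[of s], of "v - w"]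
    by (simp add: matrix_vector_mult_diff_distrib)
  show ?thesis
    unfolding walk_scalar_def
  proof (intro iffI; elim exE conjE)
    fix \<mu> assume \<mu>: "\<mu> \<noteq> 0" "\<forall>y. walk G (s - 1) y n = \<mu> *s y"
    have "walk G s v n = \<mu> *s v" for v
    proof -
      obtain w where "v = G s *v w"
        using surj by blast
      then show ?thesis
        by (simp add: walk_step_conj \<mu>(2) vector_scalar_commute)
    qed
    then show "\<exists>\<mu>. \<mu> \<noteq> 0 \<and> (\<forall>y. walk G s y n = \<mu> *s y)"
      using \<mu>(1) by blast
  next
    fix \<mu> assume \<mu>: "\<mu> \<noteq> 0" "\<forall>y. walk G s y n = \<mu> *s y"
    have "walk G (s - 1) v n = \<mu> *s v" for v
    proof (rule inj)
      have "G s *v walk G (s - 1) v n = walk G s (G s *v v) n"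
        by (rule walk_step_conj[symmetric])
      also have "\<dots> = G s *v (\<mu> *s v)"
        using \<mu>(2) by (simp add: vector_scalar_commute)
      finally show "G s *v walk G (s - 1) v n = G s *v (\<mu> *s v)" .
    qed
    then show "\<exists>\<mu>. \<mu> \<noteq> 0 \<and> (\<forall>y. walk G (s - 1) y n = \<mu> *s y)"
      using \<mu>(1) by blast
  qed
qed

lemma walk_closes: obtains \<mu> where "\<mu> \<noteq> 0" "\<And>y. walk G s y n = \<mu> *s y"
proof -
  have "walk_scalar G n s"
    using walk_scalar_0 walk_scalar_pred_iff
    by (induction s rule: int_induct[where k = 0]) force+
  then show ?thesis
    using that by (auto simp: walk_scalar_def)
qed

end

context H_hom
begin

lemma walk_area_start_indep:
  assumes y: "cball_pt y" and y': "cball_pt y'"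
  shows "walk_area G n s y = walk_area G n s y'"
proof -
  define q where "q = walk G s y"
  define q' where "q' = walk G s y'"
  define f where "f j = tri_area origin_pt (q j) (q' j)" for j
  have cq: "cball_pt (q j)" "cball_pt (q' j)" for j
    using walk_unitary(1)[of G, OF G_unitary] y y' by (auto simp: q_def q'_def)
  have step: "tri_area origin_pt (q j) (q (Suc j)) - tri_area origin_pt (q' j) (q' (Suc j))
      = f j - f (Suc j)" for j
  proof -
    obtain k where k: "k \<noteq> 0" "\<And>v. G (s + int (Suc j)) *v (G (s + int (Suc j)) *v v) = k *s v"
      using G_involution by blast
    have "poly_area origin_pt [q j, q (Suc j), q' (Suc j), q' j] = 0"
      using poly_area_involution_quadrilateral[OF G_unitary k(2) k(1) cq]
      by (simp add: q_def q'_def)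
    then show ?thesis
      using tri_area_swap[OF origin_pt_negative cq(2)[of j] cq(2)[of "Suc j"]]
        tri_area_swap[OF origin_pt_negative cq(1)[of j] cq(2)[of j]]
      by (simp add: poly_area_4 f_def)
  qed
  obtain \<mu> where "\<mu> \<noteq> 0" "\<And>v. walk G s v n = \<mu> *s v"
    using walk_closes by blast
  then have "f n = f 0"
    by (simp add: f_def q_def q'_def tri_area_scale)
  have "walk_area G n s y - walk_area G n s y' = (\<Sum>j<n. f j - f (Suc j))"
    unfolding walk_area_def q_def[symmetric] q'_def[symmetric] sum_subtractf[symmetric]
    by (intro sum.cong refl step)
  also have "\<dots> = f 0 - f n"
    by (rule sum_lessThan_telescope')
  finally show ?thesis
    using \<open>f n = f 0\<close> by simp
qed

lemma walk_area_shift: "walk_area G n (s + 1) (G (s + 1) *v y) = walk_area G n s y"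
proof -
  define g where "g j = tri_area origin_pt (walk G s y j) (walk G s y (Suc j))" for j
  obtain \<mu> where "\<mu> \<noteq> 0" "\<And>v. walk G s v n = \<mu> *s v"
    using walk_closes by blast
  moreover have "walk G s y (Suc n) = G (s + 1) *v walk G s y n"
    using G_periodic[of "s + 1"] by (simp add: algebra_simps)
  ultimately have "g n = g 0"
    by (simp add: g_def vector_scalar_commute tri_area_scale)
  have "walk_area G n (s + 1) (G (s + 1) *v y) = (\<Sum>j<n. g (Suc j))"
    by (simp only: walk_area_def walk_Suc_start g_def)
  also have "\<dots> = (\<Sum>j<n. g j) + g n - g 0"
    using sum.lessThan_Suc_shift[of g n] by simp
  finally show ?thesis
    using \<open>g n = g 0\<close> by (simp add: walk_area_def g_def)
qed

lemma area_rho_eq_walk_area: "area_rho G n = walk_area G n 0 origin_pt"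
proof -
  define q where "q = walk G 0 origin_pt"
  obtain \<mu> where \<mu>: "\<mu> \<noteq> 0" "\<And>v. walk G 0 v n = \<mu> *s v"
    using walk_closes by blast
  have closed: "q (1 + n) = \<mu> *s q 1"
    using \<mu>(2) G_periodic[of 1] by (simp add: q_def vector_scalar_commute add.commute)
  have "orbit G origin_pt = q"
    by (simp add: q_def orbit_eq_walk fun_eq_iff)
  then have "area_rho G n = poly_area origin_pt (map q [1..<1 + n])"
    by (simp add: area_rho_def add.commute del: upt_Suc)
  also have "\<dots> = (\<Sum>k<n. tri_area origin_pt (q (1 + k)) (q (1 + Suc k)))"
    by (rule poly_area_map_upt[OF \<mu>(1) closed])
  also have "\<dots> = walk_area G n 1 (G 1 *v origin_pt)"
    using walk_Suc_start[of G 0] by (simp add: walk_area_def q_def)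
  also have "\<dots> = walk_area G n 0 origin_pt"
    using walk_area_shift[of 0] by simp
  finally show ?thesis .
qed

lemma walk_area_eq_area_rho:
  assumes "cball_pt y"
  shows "walk_area G n s y = area_rho G n"
proof -
  have o: "cball_pt origin_pt"
    by (rule negative_ptD[OF origin_pt_negative])
  have indep: "walk_area G n s y = walk_area G n s origin_pt" if "cball_pt y" for s y
    by (rule walk_area_start_indep[OF that o])
  have "\<forall>y. cball_pt y \<longrightarrow> walk_area G n s y = area_rho G n"
  proof (induction s rule: int_induct[where k = 0])
    case base
    then show ?case
      using indep area_rho_eq_walk_area by simp
  next
    case (step1 i)
    then show ?case
      using indep walk_area_shift[of i origin_pt] unitary_cball_pt[OF G_unitary o, of "i + 1"]
      by metis
  next
    case (step2 i)
    then show ?case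
      using indep walk_area_shift[of "i - 1" origin_pt] unitary_cball_pt[OF G_unitary o, of i]
      by (metis diff_add_cancel)
  qed
  then show ?thesis
    using assms by blast
qed

end

context H_hom
begin

text \<open>
  If \<open>x\<close> is fixed by \<open>G i G (i - 1)\<close>, the walk from \<open>p\<^sub>i\<^sub>-\<^sub>2 = x\<close> returns to \<open>x\<close> after two steps,
  which cancel; what remains is the \<open>(n - 2)\<close>-gon \<open>p\<^sub>i, \<dots>, p\<^sub>i\<^sub>+\<^sub>n\<^sub>-\<^sub>3\<close>.
\<close>

lemma walk_area_fixed_point:
  assumes n: "n \<ge> 2" and x: "cball_pt x" and fx: "fixes_pt (G i ** G (i - 1)) x"
  shows "walk_area G n (i - 2) x = poly_area origin_pt (map (walk G (i - 2) x) [2..<n])"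
proof -
  define q where "q = walk G (i - 2) x"
  define g where "g j = tri_area origin_pt (q j) (q (Suc j))" for j
  obtain \<nu> where \<nu>: "(G i ** G (i - 1)) *v x = \<nu> *s x" and "x \<noteq> 0"
    using fx by (auto simp: fixes_pt_def)
  then have "\<nu> \<noteq> 0"
    using unitary_eigenvalue_nonzero[OF unitary_mult[OF G_unitary G_unitary]] by blast
  have q2: "q 2 = \<nu> *s x"
    using \<nu> by (simp add: q_def numeral_2_eq_2 matrix_vector_mul_assoc)
  obtain \<mu> where \<mu>: "\<mu> \<noteq> 0" "\<And>v. walk G (i - 2) v n = \<mu> *s v"
    using walk_closes by blast
  have "q (2 + (n - 2)) = q n"
    using n by (simp only: le_add_diff_inverse)
  also have "\<dots> = (\<mu> / \<nu>) *s q 2"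
    using \<mu>(2) \<open>\<nu> \<noteq> 0\<close> by (simp add: q_def q2[unfolded q_def])
  finally have closed: "q (2 + (n - 2)) = (\<mu> / \<nu>) *s q 2" .
  have "q 0 = x" "cball_pt (q 1)"
    using unitary_cball_pt[OF G_unitary x] by (simp_all add: q_def)
  then have "g 0 + g 1 = 0"
    using tri_area_swap[OF origin_pt_negative x] \<open>\<nu> \<noteq> 0\<close>
    by (simp add: g_def q2[unfolded numeral_2_eq_2] tri_area_scale)
  then have "walk_area G n (i - 2) x = (\<Sum>k<n - 2. g (2 + k))"
    using n sum.lessThan_Suc_shift[of g "n - 1"] sum.lessThan_Suc_shift[of "\<lambda>j. g (Suc j)" "n - 2"]
    by (simp add: walk_area_def g_def q_def Suc_diff_Suc numeral_2_eq_2)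
  also have "\<dots> = poly_area origin_pt (map q [2..<2 + (n - 2)])"
    using poly_area_map_upt[OF _ closed] \<mu>(1) \<open>\<nu> \<noteq> 0\<close> by (simp add: g_def)
  finally show ?thesis
    by (simp only: q_def le_add_diff_inverse[OF n])
qed

lemma no_negative_fixed_point:
  assumes n: "n \<ge> 5" and area: "area_rho G n = (real n - 4) * pi"
    and x: "negative_pt x" and fx: "fixes_pt (G i ** G (i - 1)) x"
  shows False
proof -
  define ps where "ps = map (walk G (i - 2) x) [2..<n]"
  have negs: "\<forall>p\<in>set ps. negative_pt p"
    using walk_unitary(2)[of G, OF G_unitary x] by (auto simp: ps_def)
  have "area_rho G n = poly_area origin_pt ps"
    using walk_area_eq_area_rho[OF negative_ptD[OF x]] walk_area_fixed_point[OF _ negative_ptD[OF x] fx] n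
    by (simp add: ps_def)
  also have "\<dots> = poly_area (ps ! 0) ps"
    using negs n by (intro poly_area_base_change origin_pt_negative) (auto simp: ps_def negative_ptD)
  also have "\<dots> < (real (length ps) - 2) * pi"
    using negs n by (intro poly_area_negative_less) (auto simp: ps_def)
  finally show False
    using area n by (simp add: ps_def)
qed

lemma fixed_point_positive_cycle:
  assumes n: "n \<ge> 5" and area: "area_rho G n = (real n - 4) * pi"
    and x: "isotropic_pt x" and fx: "fixes_pt (G i ** G (i - 1)) x"
  shows "positive_cycle (map (chain G i x) [2..<n])"
proof -
  define ps where "ps = map (walk G (i - 2) x) [2..<n]"
  have "poly_area origin_pt ps = area_rho G n"
    using walk_area_eq_area_rho[OF isotropic_ptD[OF x]] walk_area_fixed_point[OF _ isotropic_ptD[OF x] fx] n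
    by (simp add: ps_def)
  moreover have "\<forall>p\<in>set ps. isotropic_pt p"
    using walk_unitary(3)[of G, OF G_unitary x] by (auto simp: ps_def)
  ultimately have "positive_cycle ps"
    using n area by (intro positive_cycle_of_poly_area) (auto simp: ps_def)
  then show ?thesis
    by (simp add: ps_def chain_eq_walk[abs_def])
qed

end

subsection \<open>Unitary involutions\<close>

lemma matrix_eigenvector_exists: "\<exists>v. fixes_pt (M :: cmat) v"
proof (cases "M$1$2 = 0")
  case True
  then have "M *v vector [0, 1] = M$2$2 *s vector [0, 1]"
    by (simp add: vec2_eq_iff matrix_vector_mult_nth2)
  then show ?thesis
    unfolding fixes_pt_def by (intro exI[of _ "vector [0, 1]"]) (auto simp: vec2_nonzero_iff)
next
  case False
  define a b c e where "a = M$1$1" "b = M$1$2" "c = M$2$1" "e = M$2$2"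
  define s where "s = csqrt ((a - e)\<^sup>2 + 4 * b * c)"
  define l where "l = (a + e + s) / 2"
  have "c * b + e * (l - a) - l * (l - a) = ((a - e)\<^sup>2 + 4 * b * c - s\<^sup>2) / 4"
    by (simp add: l_def field_simps power2_eq_square)
  then have "c * b + e * (l - a) = l * (l - a)"
    by (simp add: s_def)
  then have "M *v vector [b, l - a] = l *s vector [b, l - a]"
    by (simp add: vec2_eq_iff matrix_vector_mult_nth2 a_b_c_e_def algebra_simps)
  then show ?thesis
    using False unfolding fixes_pt_def
    by (intro exI[of _ "vector [b, l - a]"]) (auto simp: vec2_nonzero_iff a_b_c_e_def)
qed

lemma unitary_eigen_herm:
  assumes "unitary_U M" "M *v v = a *s v" "M *v w = b *s w"
  shows "a * cnj b * herm v w = herm v w"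
  using unitary_herm[OF assms(1), of v w] assms(2,3) by (simp add: herm_scale_left herm_scale_right mult_ac)

lemma unitary_perp_eigenvector:
  assumes U: "unitary_U M" and v: "M *v v = l *s v" "v \<noteq> 0"
  shows "\<exists>t. M *v perp v = t *s perp v"
proof -
  have "l \<noteq> 0"
    using unitary_eigenvalue_nonzero[OF U v] .
  have "herm (M *v perp v) (M *v v) = 0"
    using unitary_herm[OF U] by (simp add: herm_perp_left)
  then have "herm (M *v perp v) v = 0"
    using \<open>l \<noteq> 0\<close> by (simp add: v herm_scale_right)
  then show ?thesis
    using herm_eq_0_imp_perp v(2) by blast
qed

lemma perp_perp [simp]: "perp (perp v) = v"
  by (simp add: vec2_eq_iff)

lemma unitary_involution_perp_eigenvector:
  assumes U: "unitary_U A" and inv: "\<And>v. A *v (A *v v) = k *s v"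
    and nonscalar: "\<not> (\<exists>c. \<forall>v. A *v v = c *s v)"
    and v: "A *v v = l *s v" "v \<noteq> 0"
  shows "A *v perp v = (- l) *s perp v"
proof -
  have "(l * l) *s v = k *s v"
    using inv[of v] by (simp add: v vector_scalar_commute)
  then have ll: "l * l = k"
    using v(2) by (metis vector_mul_rcancel)
  obtain y where y: "A *v y \<noteq> l *s y"
    using nonscalar by blast
  define u where "u = A *v y - l *s y"
  have Au: "A *v u = (- l) *s u"
    by (simp add: u_def vector_scalar_commute inv ll algebra_simps)
  have "(1 + l * cnj l) * herm v u = 0"
    using unitary_eigen_herm[OF U v(1) Au] by (simp add: distrib_right) (metis add.commute neg_eq_iff_add_eq_0)
  moreover have "Re (1 + l * cnj l) > 0"
    by (simp add: complex_mult_cnj add_pos_nonneg)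
  ultimately have "herm u v = 0"
    using herm_eq_0_commute by fastforce
  then obtain t where t: "u = t *s perp v"
    using herm_eq_0_imp_perp v(2) by blast
  have "u \<noteq> 0"
    using y by (simp add: u_def)
  then have "t \<noteq> 0"
    using t by auto
  moreover have "t *s (A *v perp v) = t *s ((- l) *s perp v)"
    using Au t by (simp add: vector_scalar_commute mult.commute)
  ultimately show ?thesis
    by (metis vector_mul_lcancel)
qed

text \<open>
  A unitary involution that is not a scalar has eigenvalues \<open>\<pm>l\<close>; its eigenlines are orthogonal,
  hence one of them is negative.
\<close>

lemma unitary_involution_eigenbasis:
  assumes U: "unitary_U A" and inv: "\<And>v. A *v (A *v v) = k *s v"
    and nonscalar: "\<not> (\<exists>c. \<forall>v. A *v v = c *s v)"
  obtains q l where "negative_pt q" "A *v q = l *s q" "A *v perp q = (- l) *s perp q"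
proof -
  obtain v l where v: "A *v v = l *s v" "v \<noteq> 0"
    using matrix_eigenvector_exists[of A] by (auto simp: fixes_pt_def)
  have Ap: "A *v perp v = (- l) *s perp v"
    by (rule unitary_involution_perp_eigenvector[OF U inv nonscalar v])
  have "l \<noteq> 0"
    using unitary_eigenvalue_nonzero[OF U v] .
  have "\<not> isotropic_pt v"
  proof
    assume "isotropic_pt v"
    then obtain s where s: "s \<noteq> 0" "perp v = s *s v"
      using isotropic_perp by blast
    then have "(s * l) *s v = (- l * s) *s v"
      using Ap v(1) by (simp add: vector_scalar_commute)
    then have "s * l = - l * s"
      using v(2) by (metis vector_mul_rcancel)
    then show False
      using \<open>l \<noteq> 0\<close> s(1) by simp
  qed
  then have "Re (herm v v) \<noteq> 0"
    using v(2) herm_self_eq_Re[of v] by (auto simp: isotropic_pt_def)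
  then consider "Re (herm v v) < 0" | "Re (herm v v) > 0"
    by linarith
  then show ?thesis
  proof cases
    case 1
    then show ?thesis
      using that[of v l] v Ap by (simp add: negative_pt_def)
  next
    case 2
    then have "negative_pt (perp v)"
      using v(2) by (simp add: negative_pt_def herm_perp_self)
    then show ?thesis
      using that[of "perp v" "- l"] v Ap by simp
  qed
qed

lemma refl_mat_apply:
  assumes "herm q q \<noteq> 0"
  shows "refl_mat q *v x = (2 * herm x q / herm q q) *s q - x"
  using assms
  by (simp add: vec2_eq_iff matrix_vector_mult_nth2 refl_mat_def sgnJ_def herm_def[of x q]
      diff_divide_distrib add_divide_distrib algebra_simps)

lemma pu_eq_refl_mat:
  assumes q: "negative_pt q" and l: "l \<noteq> 0" and Aq: "A *v q = l *s q"
    and Ap: "A *v perp q = (- l) *s perp q"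
  shows "pu_eq A (refl_mat q)"
proof -
  define h where "h = herm q q"
  have h: "h \<noteq> 0"
    using q by (auto simp: h_def negative_pt_def)
  have "refl_mat q *v x = (1 / l) *s (A *v x)" for x
  proof -
    define a b where "a = herm x q" "b = herm x (perp q)"
    have x: "x = (a / h) *s q - (b / h) *s perp q"
      using herm_expansion[of q x] h by (simp add: vec2_eq_iff a_b_def h_def field_simps)
    have Ax: "A *v x = (l * a / h) *s q + (l * b / h) *s perp q"
      by (subst x) (simp add: matrix_vector_mult_diff_distrib vector_scalar_commute Aq Ap vec2_eq_iff mult_ac)
    have "refl_mat q *v x = (2 * a / h) *s q - x"
      using refl_mat_apply[of q x] h by (simp add: a_b_def h_def)
    also have "\<dots> = (a / h) *s q + (b / h) *s perp q"
      by (subst x) (simp add: vec2_eq_iff field_simps)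
    finally show ?thesis
      unfolding Ax using l by (simp add: vec2_eq_iff field_simps)
  qed
  then have "refl_mat q = (\<chi> i j. (1 / l) * A$i$j)"
    by (simp add: matrix_eq vec2_eq_iff matrix_vector_mult_nth2 algebra_simps)
  then show ?thesis
    unfolding pu_eq_def using l by (intro exI[of _ "1 / l"]) simp
qed

lemma reflection_no_isotropic_eigenvector:
  assumes U: "unitary_U A" and q: "negative_pt q" and Aq: "A *v q = l *s q"
    and Ap: "A *v perp q = (- l) *s perp q"
    and x: "isotropic_pt x" and Ax: "A *v x = \<nu> *s x"
  shows False
proof -
  have "herm x q \<noteq> 0"
    using herm_negative_cball_nonzero[OF q isotropic_ptD[OF x]] .
  moreover have "herm x (perp q) \<noteq> 0"
  proof
    assume "herm x (perp q) = 0"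
    then obtain t where "x = t *s q"
      using herm_eq_0_imp_perp[of x "perp q"] q by (auto simp: negative_pt_def)
    then show False
      using x q by (auto simp: isotropic_pt_def negative_pt_def herm_scale_self)
  qed
  ultimately have "\<nu> * cnj l = 1" "\<nu> * cnj (- l) = 1"
    using unitary_eigen_herm[OF U Ax Aq] unitary_eigen_herm[OF U Ax Ap] by simp_all
  then show False
    by simp
qed

lemma not_proj_eq_det:
  fixes x y :: cvec
  assumes "x \<noteq> 0" "y \<noteq> 0" "\<not> proj_eq x y"
  shows "x$1 * y$2 - x$2 * y$1 \<noteq> 0"
proof
  assume D: "x$1 * y$2 - x$2 * y$1 = 0"
  have "\<exists>c. c \<noteq> 0 \<and> y = c *s x"
  proof (cases "x$1 = 0")
    case True
    then show ?thesis
      using D assms(1,2) by (intro exI[of _ "y$2 / x$2"]) (auto simp: vec2_eq_iff vec2_nonzero_iff)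
  next
    case False
    then show ?thesis
      using D assms(2) by (intro exI[of _ "y$1 / x$1"]) (auto simp: vec2_eq_iff vec2_nonzero_iff field_simps)
  qed
  then show False
    using assms by (simp add: proj_eq_def)
qed

lemma vec2_basis_decomp:
  fixes x y z :: cvec
  assumes "x$1 * y$2 - x$2 * y$1 \<noteq> 0"
  shows "\<exists>a b. z = a *s x + b *s y"
proof -
  define d where "d = x$1 * y$2 - x$2 * y$1"
  have "d \<noteq> 0"
    using assms by (simp add: d_def)
  have "(z$1 * y$2 - z$2 * y$1) * x$i + (x$1 * z$2 - x$2 * z$1) * y$i = z$i * d" if "i \<in> {1, 2}" for i
    using that by (auto simp: d_def algebra_simps)
  then have "z = ((z$1 * y$2 - z$2 * y$1) / d) *s x + ((x$1 * z$2 - x$2 * z$1) / d) *s y"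
    using \<open>d \<noteq> 0\<close> by (simp add: vec2_eq_iff add_divide_distrib[symmetric] nonzero_eq_divide_eq)
  then show ?thesis
    by blast
qed

lemma vec2_basis_unique:
  fixes x y :: cvec
  assumes "x$1 * y$2 - x$2 * y$1 \<noteq> 0" "a *s x + b *s y = 0"
  shows "a = 0" "b = 0"
proof -
  have e: "a * x$1 + b * y$1 = 0" "a * x$2 + b * y$2 = 0"
    using assms(2) by (simp_all add: vec2_eq_iff)
  have "a * (x$1 * y$2 - x$2 * y$1) = y$2 * (a * x$1 + b * y$1) - y$1 * (a * x$2 + b * y$2)"
    "b * (x$1 * y$2 - x$2 * y$1) = x$1 * (a * x$2 + b * y$2) - x$2 * (a * x$1 + b * y$1)"
    by (simp_all add: algebra_simps)
  then show "a = 0" "b = 0"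
    using e assms(1) by simp_all
qed

lemma eigenvector_of_eigenbasis:
  fixes M :: cmat
  assumes x: "M *v x = a *s x" "x \<noteq> 0" and y: "M *v y = b *s y" "y \<noteq> 0" and xy: "\<not> proj_eq x y"
    and z: "M *v z = c *s z" "z \<noteq> 0"
  shows "proj_eq z x \<or> proj_eq z y \<or> (\<forall>v. M *v v = a *s v)"
proof -
  have D: "x$1 * y$2 - x$2 * y$1 \<noteq> 0"
    using not_proj_eq_det[OF x(2) y(2) xy] .
  obtain \<alpha> \<beta> where z_eq: "z = \<alpha> *s x + \<beta> *s y"
    using vec2_basis_decomp[OF D] by blast
  have "(\<alpha> * (a - c)) *s x + (\<beta> * (b - c)) *s y = M *v z - c *s z"
    by (simp add: z_eq x(1) y(1) vector_scalar_commute vec2_eq_iff algebra_simps)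
  then have "(\<alpha> * (a - c)) *s x + (\<beta> * (b - c)) *s y = 0"
    using z(1) by simp
  then have "\<alpha> * (a - c) = 0" "\<beta> * (b - c) = 0"
    using vec2_basis_unique[OF D] by blast+
  moreover have "proj_eq z x" if "\<beta> = 0"
    using that z_eq z(2) x(2) by (auto simp: proj_eq_def intro!: exI[of _ "1 / \<alpha>"])
  moreover have "proj_eq z y" if "\<alpha> = 0"
    using that z_eq z(2) y(2) by (auto simp: proj_eq_def intro!: exI[of _ "1 / \<beta>"])
  moreover have "M *v v = a *s v" if "a = b" for v
  proof -
    obtain \<alpha>' \<beta>' where v: "v = \<alpha>' *s x + \<beta>' *s y"
      using vec2_basis_decomp[OF D] by blast
    then have "M *v v = \<alpha>' *s (a *s x) + \<beta>' *s (a *s y)"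
      using that x(1) y(1) by (simp add: matrix_vector_right_distrib vector_scalar_commute)
    also have "\<dots> = a *s v"
      by (simp add: v mult.commute)
    finally show ?thesis .
  qed
  ultimately show ?thesis
    by (metis eq_iff_diff_eq_0 mult_eq_0_iff)
qed

subsection \<open>Homomorphisms of extremal area\<close>

locale extremal_H_hom = H_hom +
  assumes n_ge_5: "n \<ge> 5" and area_extremal: "area_rho G n = (real n - 4) * pi"
begin

lemma product_no_negative_fixed_point: "negative_pt x \<Longrightarrow> \<not> fixes_pt (G i ** G (i - 1)) x"
  using no_negative_fixed_point[OF n_ge_5 area_extremal] by blast

lemma G_negative_eigenvector: obtains q l where "negative_pt q" "G i *v q = l *s q"
proof (cases "\<exists>c. \<forall>v. G i *v v = c *s v")
  case True
  then show ?thesis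
    using that origin_pt_negative by blast
next
  case False
  obtain k where "k \<noteq> 0" "\<And>v. G i *v (G i *v v) = k *s v"
    using G_involution by blast
  then show ?thesis
    using unitary_involution_eigenbasis[OF G_unitary _ False] that by metis
qed

lemma G_nonscalar: "\<not> (\<exists>c. \<forall>v. G i *v v = c *s v)"
proof
  assume "\<exists>c. \<forall>v. G i *v v = c *s v"
  then obtain c where c: "\<And>v. G i *v v = c *s v"
    by blast
  obtain q l where q: "negative_pt q" "G (i - 1) *v q = l *s q"
    using G_negative_eigenvector by blast
  then have "fixes_pt (G i ** G (i - 1)) q"
    by (auto simp: fixes_pt_def negative_pt_def c matrix_vector_mul_assoc[symmetric])
  then show False
    using product_no_negative_fixed_point q(1) by blast
qed

lemma G_reflection_eigenbasis:
  obtains q l where "negative_pt q" "G i *v q = l *s q" "G i *v perp q = (- l) *s perp q"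
proof -
  obtain k where "k \<noteq> 0" "\<And>v. G i *v (G i *v v) = k *s v"
    using G_involution by blast
  then show ?thesis
    using unitary_involution_eigenbasis[OF G_unitary _ G_nonscalar] that by metis
qed

definition center :: "int \<Rightarrow> cvec" where
  "center i = (SOME q. negative_pt q \<and> (\<exists>l. G i *v q = l *s q \<and> G i *v perp q = (- l) *s perp q))"

lemma center_negative_eigenvectors:
  "negative_pt (center i)
    \<and> (\<exists>l. G i *v center i = l *s center i \<and> G i *v perp (center i) = (- l) *s perp (center i))"
proof -
  have "\<exists>q. negative_pt q \<and> (\<exists>l. G i *v q = l *s q \<and> G i *v perp q = (- l) *s perp q)"
    using G_reflection_eigenbasis by metis
  then show ?thesis
    unfolding center_def by (rule someI_ex)
qed

lemma center_negative: "negative_pt (center i)"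
  using center_negative_eigenvectors by blast

lemma center_eigenvectors:
  obtains l where "G i *v center i = l *s center i" "G i *v perp (center i) = (- l) *s perp (center i)"
  using center_negative_eigenvectors by blast

lemma G_eq_refl_center: "pu_eq (G i) (refl_mat (center i))"
proof -
  obtain l where l: "G i *v center i = l *s center i" "G i *v perp (center i) = (- l) *s perp (center i)"
    using center_eigenvectors by blast
  then have "l \<noteq> 0"
    using unitary_eigenvalue_nonzero[OF G_unitary] center_negative by (auto simp: negative_pt_def)
  then show ?thesis
    using pu_eq_refl_mat[OF center_negative] l by blast
qed

lemma center_distinct: "\<not> proj_eq (center (i - 1)) (center i)"
proof
  assume "proj_eq (center (i - 1)) (center i)"
  then obtain c where c: "center i = c *s center (i - 1)"
    by (auto simp: proj_eq_def)
  obtain l' where "G (i - 1) *v center (i - 1) = l' *s center (i - 1)"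
    by (rule center_eigenvectors)
  then have "G (i - 1) *v center i = l' *s center i"
    by (simp add: c vector_scalar_commute mult.commute)
  moreover obtain l where "G i *v center i = l *s center i"
    by (rule center_eigenvectors)
  ultimately have "(G i ** G (i - 1)) *v center i = (l * l') *s center i"
    by (simp add: matrix_vector_mul_assoc[symmetric] vector_scalar_commute mult.commute)
  then have "fixes_pt (G i ** G (i - 1)) (center i)"
    using center_negative by (auto simp: fixes_pt_def negative_pt_def)
  then show False
    using product_no_negative_fixed_point center_negative by blast
qed

end

context extremal_H_hom
begin

lemma product_unitary: "unitary_U (G i ** G (i - 1))"
  by (rule unitary_mult[OF G_unitary G_unitary])

lemma product_fixed_point_isotropic:
  assumes fx: "fixes_pt (G i ** G (i - 1)) x"
  shows "isotropic_pt x"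
proof -
  obtain \<alpha> where x: "(G i ** G (i - 1)) *v x = \<alpha> *s x" "x \<noteq> 0"
    using fx by (auto simp: fixes_pt_def)
  have "\<not> Re (herm x x) < 0"
    using product_no_negative_fixed_point fx x(2) by (auto simp: negative_pt_def)
  moreover have "\<not> Re (herm x x) > 0"
  proof
    assume "Re (herm x x) > 0"
    then have "negative_pt (perp x)"
      using x(2) by (simp add: negative_pt_def herm_perp_self)
    moreover have "fixes_pt (G i ** G (i - 1)) (perp x)"
      using unitary_perp_eigenvector[OF product_unitary x] x(2) by (simp add: fixes_pt_def)
    ultimately show False
      using product_no_negative_fixed_point by blast
  qed
  ultimately show ?thesis
    using x(2) herm_self_eq_Re[of x] by (simp add: isotropic_pt_def)
qed

lemma product_fixed_point_swap:
  assumes x: "(G i ** G (i - 1)) *v x = \<alpha> *s x" "x \<noteq> 0"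
  shows "\<exists>\<beta>. (G i ** G (i - 1)) *v (G i *v x) = \<beta> *s (G i *v x)"
proof -
  obtain k where k: "k \<noteq> 0" "\<And>v. G i *v (G i *v v) = k *s v"
    using G_involution by blast
  obtain k' where k': "k' \<noteq> 0" "\<And>v. G (i - 1) *v (G (i - 1) *v v) = k' *s v"
    using G_involution by blast
  have "\<alpha> \<noteq> 0"
    using unitary_eigenvalue_nonzero[OF product_unitary x] .
  have "\<alpha> *s (G (i - 1) *v (G i *v x)) = G (i - 1) *v (G i *v ((G i ** G (i - 1)) *v x))"
    by (simp add: x(1) vector_scalar_commute)
  also have "\<dots> = (k * k') *s x"
    by (simp add: matrix_vector_mul_assoc[symmetric] k(2) k'(2) vector_scalar_commute)
  finally have "G (i - 1) *v (G i *v x) = (k * k' / \<alpha>) *s x"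
    using \<open>\<alpha> \<noteq> 0\<close> by (simp add: vec2_eq_iff field_simps)
  then show ?thesis
    by (auto simp: matrix_vector_mul_assoc[symmetric] vector_scalar_commute)
qed

lemma hyperbolic_product: "hyperbolic (G i ** G (i - 1))"
proof -
  define M where "M = G i ** G (i - 1)"
  obtain x where fx: "fixes_pt M x"
    using matrix_eigenvector_exists by blast
  then obtain \<alpha> where x: "M *v x = \<alpha> *s x" "x \<noteq> 0"
    by (auto simp: fixes_pt_def)
  define y where "y = G i *v x"
  obtain \<beta> where y: "M *v y = \<beta> *s y" "y \<noteq> 0"
    using product_fixed_point_swap[of i x \<alpha>] x unitary_eq_0_iff[OF G_unitary]
    by (auto simp: M_def y_def)
  have x_iso: "isotropic_pt x" and y_iso: "isotropic_pt y"
    using product_fixed_point_isotropic fx y by (auto simp: M_def fixes_pt_def)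
  have xy: "\<not> proj_eq x y"
  proof
    assume "proj_eq x y"
    then obtain c where "G i *v x = c *s x"
      by (auto simp: proj_eq_def y_def)
    moreover obtain l where "G i *v center i = l *s center i" "G i *v perp (center i) = (- l) *s perp (center i)"
      by (rule center_eigenvectors)
    ultimately show False
      using reflection_no_isotropic_eigenvector[OF G_unitary center_negative] x_iso by blast
  qed
  have "proj_eq z x \<or> proj_eq z y" if z: "fixes_pt M z" for z
  proof -
    obtain \<gamma> where "M *v z = \<gamma> *s z" "z \<noteq> 0"
      using z by (auto simp: fixes_pt_def)
    moreover have "\<not> (\<forall>v. M *v v = \<alpha> *s v)"
      using product_no_negative_fixed_point[OF origin_pt_negative, of i]
      by (auto simp: M_def fixes_pt_def negative_pt_def origin_pt_negative[unfolded negative_pt_def])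
    ultimately show ?thesis
      using eigenvector_of_eigenbasis[OF x y xy] by blast
  qed
  then show ?thesis
    unfolding hyperbolic_def M_def[symmetric]
    using x_iso y_iso xy fx y by (auto simp: fixes_pt_def)
qed

end

theorem lemma3p9:
  fixes n :: nat and G :: "int \<Rightarrow> complex ^ 2 ^ 2"
  assumes "n \<ge> 5"
    and "is_hom_H n G"
    and "area_rho G n = (real n - 4) * pi"
  shows "(\<exists>q :: int \<Rightarrow> complex ^ 2.
            (\<forall>i. negative_pt (q i) \<and> pu_eq (G i) (refl_mat (q i))) \<and>
            (\<forall>i. \<not> proj_eq (q (i - 1)) (q i))) \<and>
         (\<forall>i. hyperbolic (G i ** G (i - 1))) \<and>
         (\<forall>i x. isotropic_pt x \<and> fixes_pt (G i ** G (i - 1)) x \<longrightarrow>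
            positive_cycle (map (chain G i x) [2..<n]))"
proof -
  interpret extremal_H_hom n G
    using assms by unfold_locales
  show ?thesis
    using center_negative G_eq_refl_center center_distinct hyperbolic_product
      fixed_point_positive_cycle[OF n_ge_5 area_extremal]
    by blast
qed

end
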